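(* Let $\ell,n,d_0\in\mathbb{N}$ and $d=d_0+2\ell$. Let $X\in\{-1,1\}^{n\times d_0}$, let $\mathbf{P}$ be a uniformly random $d\times d$ permutation matrix, and let $\mathbf{Y}=\mathsf{PAP}_{n,d_0,\ell}(X,\mathbf{P})$. Let $\mathsf{M}\colon\{-1,1\}^{n\times d}\to[-1,1]^d$ be a mechanism such that for every $Y$ in the support of $\mathbf{Y}$, $\mathsf{M}(Y)$ strongly-agrees with $Y$ (with probability 1). Then the random vector $(\mathsf{M}(\mathbf{Y})\cdot\mathbf{P}^T)^{1,\dots,d_0}$ (the first $d_0$ coordinates of the row vector $\mathsf{M}(\mathbf{Y})\mathbf{P}^T$) is strongly-correlated with $X$.
   Context: $\mathsf{PAP}_{n,d_0,\ell}(X,P)=X''\cdot P$, where $X''\in\{-1,1\}^{n\times d}$ is obtained from $X$ by appending $\ell$ columns with all entries $1$ and $\ell$ columns with all entries $-1$ (after the $d_0$ original columns), and $P$ is a $d\times d$ permutation matrix (permuting columns). For a matrix $Z$ and $b\in\{-1,1\}$, $\mathcal{J}_Z^b$ is the set of columns all of whose entries equal $b$. A vector $q$ strongly-agrees with $Z$ if for both $b$, $|\{j\in\mathcal{J}_Z^b:q^j=b\}|\ge0.9|\mathcal{J}_Z^b|$. A random vector $Q\in[-1,1]^{d_0}$ is strongly-correlated with $X$ if for all $b\in\{-1,1\}$ and $j\in\mathcal{J}_X^b$, $\Pr[Q^j=b]\ge0.9$ (probability over $\mathbf{P}$ and $\mathsf{M}$'s coins). *)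

theory Defs
  imports "HOL-Probability.Probability" "HOL-Combinatorics.Permutations"
begin

text \<open>Matrices are functions nat => nat => real (row index, column index), vectors are
  functions nat => real; only entries with in-range indices are meaningful and we set
  all out-of-range entries to 0 in constructed objects.\<close>

definition pad_cols :: "nat \<Rightarrow> nat \<Rightarrow> nat \<Rightarrow> (nat \<Rightarrow> nat \<Rightarrow> real) \<Rightarrow> (nat \<Rightarrow> nat \<Rightarrow> real)" where
  "pad_cols n d0 l X = (\<lambda>i j. if i < n \<and> j < d0 + 2 * l then
      (if j < d0 then X i j else if j < d0 + l then 1 else -1) else 0)"

definition perm_mat :: "nat \<Rightarrow> (nat \<Rightarrow> nat) \<Rightarrow> (nat \<Rightarrow> nat \<Rightarrow> real)" where
  "perm_mat d s = (\<lambda>j k. if j < d \<and> k < d \<and> j = s k then 1 else 0)"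

definition perm_mats :: "nat \<Rightarrow> (nat \<Rightarrow> nat \<Rightarrow> real) set" where
  "perm_mats d = perm_mat d ` {s. s permutes {..<d}}"

definition mat_mult :: "nat \<Rightarrow> nat \<Rightarrow> nat \<Rightarrow> (nat \<Rightarrow> nat \<Rightarrow> real) \<Rightarrow> (nat \<Rightarrow> nat \<Rightarrow> real) \<Rightarrow> (nat \<Rightarrow> nat \<Rightarrow> real)" where
  "mat_mult n m p A B = (\<lambda>i k. if i < n \<and> k < p then (\<Sum>j<m. A i j * B j k) else 0)"

definition vec_mat :: "nat \<Rightarrow> nat \<Rightarrow> (nat \<Rightarrow> real) \<Rightarrow> (nat \<Rightarrow> nat \<Rightarrow> real) \<Rightarrow> (nat \<Rightarrow> real)" where
  "vec_mat m p q B = (\<lambda>k. if k < p then (\<Sum>j<m. q j * B j k) else 0)"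

definition transp_mat :: "(nat \<Rightarrow> nat \<Rightarrow> real) \<Rightarrow> (nat \<Rightarrow> nat \<Rightarrow> real)" where
  "transp_mat A = (\<lambda>i j. A j i)"

definition PAP :: "nat \<Rightarrow> nat \<Rightarrow> nat \<Rightarrow> (nat \<Rightarrow> nat \<Rightarrow> real) \<Rightarrow> (nat \<Rightarrow> nat \<Rightarrow> real) \<Rightarrow> (nat \<Rightarrow> nat \<Rightarrow> real)" where
  "PAP n d0 l X P = mat_mult n (d0 + 2 * l) (d0 + 2 * l) (pad_cols n d0 l X) P"

definition constcols :: "nat \<Rightarrow> nat \<Rightarrow> (nat \<Rightarrow> nat \<Rightarrow> real) \<Rightarrow> real \<Rightarrow> nat set" where
  "constcols n m Z b = {j. j < m \<and> (\<forall>i<n. Z i j = b)}"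

definition strongly_agrees :: "nat \<Rightarrow> nat \<Rightarrow> (nat \<Rightarrow> real) \<Rightarrow> (nat \<Rightarrow> nat \<Rightarrow> real) \<Rightarrow> bool" where
  "strongly_agrees n m q Z = (\<forall>b \<in> {-1, 1::real}.
     real (card {j \<in> constcols n m Z b. q j = b}) \<ge> 0.9 * real (card (constcols n m Z b)))"

definition strongly_correlated :: "nat \<Rightarrow> nat \<Rightarrow> (nat \<Rightarrow> real) pmf \<Rightarrow> (nat \<Rightarrow> nat \<Rightarrow> real) \<Rightarrow> bool" where
  "strongly_correlated n d0 Q X = (\<forall>b \<in> {-1, 1::real}. \<forall>j \<in> constcols n d0 X b.
     measure_pmf.prob Q {q. q j = b} \<ge> 0.9)"

end

theory Submission
  imports Defs
begin

text \<open>Let \<open>s\<close> be the permutation underlying \<open>\<P>\<close>. The mechanism sees the columns of the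
  padded matrix \<open>X''\<close> permuted by \<open>s\<close>, and output coordinate \<open>j\<close> is \<open>q (s\<^sup>-\<^sup>1 j)\<close>. Let \<open>J\<close> be
  the set of columns of \<open>X''\<close> that are constantly \<open>b\<close>; it contains \<open>\<J>\<^sub>X\<^sup>b\<close>. For \<open>j, j' \<in> J\<close>,
  composing \<open>s\<close> with the transposition of \<open>j\<close> and \<open>j'\<close> leaves the input of the mechanism
  unchanged but exchanges \<open>s\<^sup>-\<^sup>1 j\<close> and \<open>s\<^sup>-\<^sup>1 j'\<close>; since \<open>s\<close> is uniform, all columns of \<open>J\<close> are
  recovered correctly with the same probability. Strong agreement says that for every \<open>s\<close> at
  least \<open>0.9 |J|\<close> of them are recovered correctly, so averaging over \<open>J\<close> gives probability at
  least \<open>0.9\<close> for each single one.\<close>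

lemma measure_pmf_prob_bind_pmf_of_set:
  assumes "finite S" "S \<noteq> {}"
  shows "measure_pmf.prob (pmf_of_set S \<bind> f) A = (\<Sum>x\<in>S. measure_pmf.prob (f x) A) / card S"
proof -
  have "emeasure (measure_pmf (pmf_of_set S \<bind> f)) A = (\<Sum>x\<in>S. emeasure (measure_pmf (f x)) A) / card S"
    using assms by (simp add: nn_integral_pmf_of_set)
  also have "\<dots> = ennreal ((\<Sum>x\<in>S. measure_pmf.prob (f x) A) / card S)"
    using assms by (simp add: measure_pmf.emeasure_eq_measure sum_nonneg divide_ennreal
        card_gt_0_iff ennreal_of_nat_eq_real_of_nat)
  finally show ?thesis
    by (simp add: measure_pmf.emeasure_eq_measure sum_nonneg divide_nonneg_nonneg)
qed

lemma sum_prob_ge_if_card_ge: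
  fixes c :: real
  assumes "finite J" and "\<And>q. q \<in> set_pmf p \<Longrightarrow> c \<le> card {j\<in>J. P j q}"
  shows "c \<le> (\<Sum>j\<in>J. measure_pmf.prob p {q. P j q})"
proof -
  have "(\<Sum>j\<in>J. measure_pmf.prob p {q. P j q})
      = measure_pmf.expectation p (\<lambda>q. \<Sum>j\<in>J. indicator {q. P j q} q)"
    by (subst Bochner_Integration.integral_sum)
       (auto intro!: measure_pmf.integrable_const_bound[where B=1])
  also have "\<dots> = measure_pmf.expectation p (\<lambda>q. card {j\<in>J. P j q})"
    using assms(1) by (simp add: indicator_def sum.If_cases Int_def)
  also have "c \<le> \<dots>"
    using assms
    by (intro measure_pmf.integral_ge_const)
       (auto simp: AE_measure_pmf_iff intro!: measure_pmf.integrable_const_bound[where B="card J"] card_mono)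
  finally show ?thesis .
qed

lemma sum_ge_if_exchangeable:
  fixes F :: "'a \<Rightarrow> 'b \<Rightarrow> real" and c :: real
  assumes "finite J" "j \<in> J"
    and exchangeable: "\<And>j'. j' \<in> J \<Longrightarrow> (\<Sum>s\<in>S. F s j') = (\<Sum>s\<in>S. F s j)"
    and bound: "\<And>s. s \<in> S \<Longrightarrow> c * card J \<le> (\<Sum>j'\<in>J. F s j')"
  shows "c * card S \<le> (\<Sum>s\<in>S. F s j)"
proof -
  have "card J * (c * card S) = (\<Sum>s\<in>S. c * card J)"
    by simp
  also have "\<dots> \<le> (\<Sum>s\<in>S. \<Sum>j'\<in>J. F s j')"
    using bound by (rule sum_mono)
  also have "\<dots> = (\<Sum>j'\<in>J. \<Sum>s\<in>S. F s j')"
    by (rule sum.swap)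
  also have "\<dots> = card J * (\<Sum>s\<in>S. F s j)"
    using exchangeable by simp
  moreover have "card J > 0"
    using assms(1,2) by (auto simp: card_gt_0_iff)
  ultimately show ?thesis
    by simp
qed

lemma sum_permutes_inv_transpose:
  assumes "j \<in> A" "j' \<in> A"
    and invariant: "\<And>s. s permutes A \<Longrightarrow> G (Transposition.transpose j j' \<circ> s) = G s"
  shows "(\<Sum>s | s permutes A. f (G s) (inv s j)) = (\<Sum>s | s permutes A. f (G s) (inv s j'))"
proof -
  let ?\<tau> = "Transposition.transpose j j'"
  have \<tau>: "?\<tau> permutes A"
    using assms(1,2) by (rule permutes_swap_id)
  have "bij_betw ((\<circ>) ?\<tau>) {s. s permutes A} {s. s permutes A}"
    by (rule bij_betw_byWitness[where f'="(\<circ>) ?\<tau>"])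
       (auto simp: comp_assoc[symmetric] intro: permutes_compose[OF _ \<tau>])
  then have "(\<Sum>s | s permutes A. f (G s) (inv s j))
      = (\<Sum>s | s permutes A. f (G (?\<tau> \<circ> s)) (inv (?\<tau> \<circ> s) j))"
    by (rule sum.reindex_bij_betw[symmetric])
  also have "\<dots> = (\<Sum>s | s permutes A. f (G s) (inv s j'))"
  proof (rule sum.cong)
    fix s assume "s \<in> {s. s permutes A}"
    then have s: "s permutes A" by simp
    have "inv (?\<tau> \<circ> s) j = inv s j'"
      using permutes_compose[OF s \<tau>]
      by (simp add: permutes_inv_eq permutes_inverses[OF s])
    then show "f (G (?\<tau> \<circ> s)) (inv (?\<tau> \<circ> s) j) = f (G s) (inv s j')"
      using invariant[OF s] by simp
  qed simp
  finally show ?thesis .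
qed

definition permute_cols :: "nat \<Rightarrow> nat \<Rightarrow> (nat \<Rightarrow> nat \<Rightarrow> real) \<Rightarrow> (nat \<Rightarrow> nat) \<Rightarrow> (nat \<Rightarrow> nat \<Rightarrow> real)" where
  "permute_cols n d Z s = (\<lambda>i k. if i < n \<and> k < d then Z i (s k) else 0)"

lemma mat_mult_perm_mat:
  assumes "s permutes {..<d}"
  shows "mat_mult n d d Z (perm_mat d s) = permute_cols n d Z s"
proof (intro ext)
  fix i k
  have "(\<Sum>j<d. Z i j * perm_mat d s j k) = (\<Sum>j<d. if j = s k then Z i j else 0)"
    if "k < d" using that by (intro sum.cong) (auto simp: perm_mat_def)
  moreover have "s k < d" if "k < d"
    using that permutes_in_image[OF assms] by simp
  ultimately show "mat_mult n d d Z (perm_mat d s) i k = permute_cols n d Z s i k"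
    by (simp add: mat_mult_def permute_cols_def)
qed

lemma vec_mat_transp_perm_mat:
  assumes s: "s permutes {..<d}" and "j < d"
  shows "vec_mat d d q (transp_mat (perm_mat d s)) j = q (inv s j)"
proof -
  have "inv s j < d"
    using permutes_in_image[OF permutes_inv[OF s]] assms(2) by simp
  moreover have "(\<Sum>k<d. q k * transp_mat (perm_mat d s) k j) = (\<Sum>k<d. if k = inv s j then q k else 0)"
    using assms(2) by (intro sum.cong) (auto simp: transp_mat_def perm_mat_def permutes_inverses[OF s])
  ultimately show ?thesis
    using assms(2) by (simp add: vec_mat_def)
qed

lemma inj_on_perm_mat: "inj_on (perm_mat d) {s. s permutes {..<d}}"
proof (rule inj_onI)
  fix s t assume s: "s \<in> {s. s permutes {..<d}}" and t: "t \<in> {s. s permutes {..<d}}"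
    and eq: "perm_mat d s = perm_mat d t"
  show "s = t"
  proof
    fix k
    show "s k = t k"
    proof (cases "k < d")
      case True
      then have "perm_mat d s (s k) k = 1"
        using permutes_in_image[of s "{..<d}"] s by (simp add: perm_mat_def)
      then have "perm_mat d t (s k) k = 1"
        by (simp add: eq)
      then show ?thesis by (simp add: perm_mat_def split: if_splits)
    next
      case False
      then show ?thesis using s t by (simp add: permutes_def)
    qed
  qed
qed

lemma pmf_of_set_perm_mats:
  "pmf_of_set (perm_mats d) = map_pmf (perm_mat d) (pmf_of_set {s. s permutes {..<d}})"
  unfolding perm_mats_def
  by (rule map_pmf_of_set_inj[symmetric]) (auto intro: inj_on_perm_mat permutes_id finite_permutations)

lemma constcols_permute_cols:
  assumes s: "s permutes {..<d}"
  shows "constcols n d (permute_cols n d Z s) b = inv s ` constcols n d Z b"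
proof (intro equalityI subsetI)
  fix k assume "k \<in> constcols n d (permute_cols n d Z s) b"
  moreover have "k = inv s (s k)"
    by (simp add: permutes_inverses[OF s])
  ultimately show "k \<in> inv s ` constcols n d Z b"
    using permutes_in_image[OF s] by (auto simp: constcols_def permute_cols_def)
next
  fix k assume "k \<in> inv s ` constcols n d Z b"
  then obtain j where "j \<in> constcols n d Z b" "k = inv s j" by blast
  moreover have "inv s j < d" if "j < d"
    using that permutes_in_image[OF permutes_inv[OF s]] by simp
  ultimately show "k \<in> constcols n d (permute_cols n d Z s) b"
    by (auto simp: constcols_def permute_cols_def permutes_inverses[OF s])
qed

lemma strongly_agrees_permute_cols:
  assumes s: "s permutes {..<d}" and "b \<in> {-1, 1}"
    and "strongly_agrees n d q (permute_cols n d Z s)"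
  shows "0.9 * card (constcols n d Z b) \<le> card {j \<in> constcols n d Z b. q (inv s j) = b}"
proof -
  let ?J = "constcols n d Z b"
  have inj: "inj_on (inv s) A" for A
    using permutes_inj[OF permutes_inv[OF s]] by (rule inj_on_subset) simp
  have "{k \<in> inv s ` ?J. q k = b} = inv s ` {j \<in> ?J. q (inv s j) = b}"
    by auto
  then have "card {k \<in> inv s ` ?J. q k = b} = card {j \<in> ?J. q (inv s j) = b}"
    by (simp add: card_image[OF inj])
  moreover have "0.9 * card (inv s ` ?J) \<le> card {k \<in> inv s ` ?J. q k = b}"
    using assms(2,3) unfolding strongly_agrees_def constcols_permute_cols[OF s] by blast
  ultimately show ?thesis
    by (simp add: card_image[OF inj])
qed

lemma permute_cols_transpose_constcols:
  assumes "j \<in> constcols n d Z b" "j' \<in> constcols n d Z b"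
  shows "permute_cols n d Z (Transposition.transpose j j' \<circ> s) = permute_cols n d Z s"
  using assms by (intro ext) (auto simp: permute_cols_def constcols_def Transposition.transpose_def)

lemma constcols_pad_cols:
  assumes "j \<in> constcols n d0 X b"
  shows "j \<in> constcols n (d0 + 2 * l) (pad_cols n d0 l X) b"
  using assms by (simp add: constcols_def pad_cols_def)

lemma sum_prob_unpermuted_coord_ge:
  fixes M :: "(nat \<Rightarrow> nat \<Rightarrow> real) \<Rightarrow> (nat \<Rightarrow> real) pmf"
  assumes b: "b \<in> {-1, 1}" and j: "j \<in> constcols n d Z b"
    and agrees: "\<And>s q. s permutes {..<d} \<Longrightarrow> q \<in> set_pmf (M (permute_cols n d Z s)) \<Longrightarrow>
                   strongly_agrees n d q (permute_cols n d Z s)"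
  shows "0.9 * fact d
           \<le> (\<Sum>s | s permutes {..<d}. measure_pmf.prob (M (permute_cols n d Z s)) {q. q (inv s j) = b})"
proof -
  let ?S = "{s. s permutes {..<d}}"
  let ?J = "constcols n d Z b"
  define F where "F s k = measure_pmf.prob (M (permute_cols n d Z s)) {q. q (inv s k) = b}" for s k
  have "0.9 * card ?S \<le> (\<Sum>s\<in>?S. F s j)"
  proof (rule sum_ge_if_exchangeable[of ?J])
    fix k assume k: "k \<in> ?J"
    show "(\<Sum>s\<in>?S. F s k) = (\<Sum>s\<in>?S. F s j)"
      unfolding F_def using k j permute_cols_transpose_constcols[OF k j]
      by (intro sum_permutes_inv_transpose[where G="\<lambda>s. M (permute_cols n d Z s)"])
         (auto simp: constcols_def)
  next
    fix s assume "s \<in> ?S"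
    then show "0.9 * card ?J \<le> (\<Sum>k\<in>?J. F s k)"
      unfolding F_def using b agrees
      by (intro sum_prob_ge_if_card_ge strongly_agrees_permute_cols) (auto simp: constcols_def)
  qed (use j in \<open>auto simp: constcols_def\<close>)
  then show ?thesis
    by (simp add: F_def card_permutations)
qed

lemma PAP_perm_mat:
  assumes "s permutes {..<d0 + 2 * l}"
  shows "PAP n d0 l X (perm_mat (d0 + 2 * l) s) = permute_cols n (d0 + 2 * l) (pad_cols n d0 l X) s"
  using assms by (simp add: PAP_def mat_mult_perm_mat)

lemma prob_unpermuted_coord_PAP:
  assumes "d = d0 + 2 * l" "j < d0"
  shows "measure_pmf.prob
           (do { P \<leftarrow> pmf_of_set (perm_mats d);
                 q \<leftarrow> M (PAP n d0 l X P);
                 return_pmf (\<lambda>j. if j < d0 then vec_mat d d q (transp_mat P) j else 0) }) {q. q j = b}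
       = (\<Sum>s | s permutes {..<d}.
            measure_pmf.prob (M (permute_cols n d (pad_cols n d0 l X) s)) {q. q (inv s j) = b}) / fact d"
proof -
  have S: "finite {s. s permutes {..<d}}" "{s. s permutes {..<d}} \<noteq> {}"
    using finite_permutations[of "{..<d}"] permutes_id by blast+
  show ?thesis
    unfolding pmf_of_set_perm_mats bind_map_pmf measure_pmf_prob_bind_pmf_of_set[OF S]
    using assms
    by (intro arg_cong2[where f="(/)"] sum.cong)
       (auto simp: PAP_perm_mat vec_mat_transp_perm_mat card_permutations map_pmf_def[symmetric] vimage_def)
qed

theorem lemma6p2:
  fixes l n d0 d :: nat
    and X :: "nat \<Rightarrow> nat \<Rightarrow> real"
    and M :: "(nat \<Rightarrow> nat \<Rightarrow> real) \<Rightarrow> (nat \<Rightarrow> real) pmf"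
  assumes d_def: "d = d0 + 2 * l"
    and X_pm1: "\<forall>i<n. \<forall>j<d0. X i j \<in> {-1, 1}"
    and M_range: "\<forall>Y. \<forall>q \<in> set_pmf (M Y). \<forall>k<d. q k \<in> {-1..1}"
    and M_agree: "\<forall>P \<in> perm_mats d. \<forall>q \<in> set_pmf (M (PAP n d0 l X P)).
                     strongly_agrees n d q (PAP n d0 l X P)"
  shows "strongly_correlated n d0
           (do { P \<leftarrow> pmf_of_set (perm_mats d);
                 q \<leftarrow> M (PAP n d0 l X P);
                 return_pmf (\<lambda>j. if j < d0 then vec_mat d d q (transp_mat P) j else 0) }) X"
  unfolding strongly_correlated_def
proof (intro ballI)
  fix b :: real and j
  assume b: "b \<in> {-1, 1}" and j: "j \<in> constcols n d0 X b"
  have agrees: "strongly_agrees n d q (permute_cols n d (pad_cols n d0 l X) s)"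
    if "s permutes {..<d}" "q \<in> set_pmf (M (permute_cols n d (pad_cols n d0 l X) s))" for s q
    using M_agree that PAP_perm_mat[of s d0 l n X, folded d_def] unfolding perm_mats_def by auto
  have "0.9 * fact d \<le> (\<Sum>s | s permutes {..<d}.
          measure_pmf.prob (M (permute_cols n d (pad_cols n d0 l X) s)) {q. q (inv s j) = b})"
    using sum_prob_unpermuted_coord_ge[OF b constcols_pad_cols[OF j, of l, folded d_def] agrees] .
  then show "0.9 \<le> measure_pmf.prob
           (do { P \<leftarrow> pmf_of_set (perm_mats d);
                 q \<leftarrow> M (PAP n d0 l X P);
                 return_pmf (\<lambda>j. if j < d0 then vec_mat d d q (transp_mat P) j else 0) }) {q. q j = b}"
    using prob_unpermuted_coord_PAP[OF d_def] j by (simp add: constcols_def pos_le_divide_eq)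
qed

end
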